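(* Let $E$ be a complex vector space of dimension $2$ and let $f,g$ be linear endomorphisms of $E$. Let $(t_n)_{n\in\mathbb{N}}$ be a strictly increasing sequence of integers with $t_0=1$ and $t_1=2$. If for every $n\in\mathbb{N}$, $\exp(t_n f+g)=\exp(t_n f)\circ\exp(g)$, then $f$ and $g$ are simultaneously trigonalizable (there is a basis of $E$ in which both are represented by upper triangular matrices).
   Context: $\exp(u)=\sum_{k\ge0}u^k/k!$ for a linear endomorphism $u$. *)

theory Defs
  imports "HOL-Analysis.Analysis"
begin

text \<open>Linear endomorphisms of the 2-dimensional complex space are represented by
  their matrices in the standard basis, i.e. elements of complex^2^2.\<close>

fun matpow :: "complex^'n^'n \<Rightarrow> nat \<Rightarrow> complex^'n^'n" where
  "matpow A 0 = mat 1"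
| "matpow A (Suc k) = A ** matpow A k"

definition mexp :: "complex^'n^'n \<Rightarrow> complex^'n^'n" where
  "mexp A = (\<Sum>k. (1 / fact k) *\<^sub>R matpow A k)"

definition upper_triangular :: "complex^('n::{finite,linorder})^('n::{finite,linorder}) \<Rightarrow> bool" where
  "upper_triangular M \<longleftrightarrow> (\<forall>i j. j < i \<longrightarrow> M $ i $ j = 0)"

definition simult_trigonalizable :: "complex^('n::{finite,linorder})^('n::{finite,linorder}) \<Rightarrow> complex^('n::{finite,linorder})^('n::{finite,linorder}) \<Rightarrow> bool" where
  "simult_trigonalizable F G \<longleftrightarrow>
     (\<exists>P :: complex^('n::{finite,linorder})^('n::{finite,linorder}). invertible P \<and> upper_triangular (matrix_inv P ** F ** P)
                      \<and> upper_triangular (matrix_inv P ** G ** P))"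

end

(*
  For a 2 x 2 matrix X with eigenvalues l1, l2, Cayley-Hamilton gives exp X = U X + V I with
  l1 U + V = exp l1 and l2 U + V = exp l2. Hence U = 0 forces V = exp l1 = exp l2 to be nonzero
  and l1 - l2 to be a nonzero multiple of 2 pi i, i.e. disc X = (trace X)^2 - 4 det X = (2 pi i m)^2
  with m a nonzero integer.

  If f and g are not simultaneously trigonalizable, they have no common eigenvector, which for
  2 x 2 matrices means det [f, g] <> 0. Then I, A, B, AB are linearly independent for A = tau f,
  B = g (tau <> 0), and writing exp (A + B) = exp A exp B in this basis forces the U-coefficients
  of A, B and A + B to vanish. So disc f, disc g, disc (f + g) and disc (t_n f + g) are all
  (2 pi i)^2 times squares of integers. As disc (tau f + g) = k^2 tau^2 + p tau + m^2 up to the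
  factor (2 pi i)^2, a quadratic that is a perfect square at infinitely many integers, we get
  p^2 = 4 k^2 m^2, which says exactly that 16 det [f, g] = 4 disc f disc g - (disc (f + g) -
  disc f - disc g)^2 vanishes.
*)
theory Submission
  imports Defs
begin

lemma mat_nth: "mat c $ i $ j = (if i = j then c else 0)"
  by (simp add: mat_def)

lemma mat_mult_nth [simp]: "(mat c ** X) $ i $ j = c * X $ i $ j"
  for X :: "'a::semiring_1^'n^'m"
  by (simp add: matrix_matrix_mult_def mat_def if_distrib if_distribR cong: if_cong)

lemma matrix_mult_nth_2: "(A ** B) $ i $ j = A $ i $ 1 * B $ 1 $ j + A $ i $ 2 * B $ 2 $ j"
  for A :: "'a::semiring_1^2^'m" and B :: "'a^'p^2"
  by (simp add: matrix_matrix_mult_def sum_2)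

lemma matrix_scaleR_nth: "(\<tau> *\<^sub>R A) $ i $ j = of_real \<tau> * A $ i $ j"
  for A :: "'a::real_algebra_1^'n^'m"
  unfolding vector_scaleR_component by (rule scaleR_conv_of_real)

lemma trace_2: "trace A = A $ 1 $ 1 + A $ 2 $ 2"
  for A :: "'a::semiring_1^2^2"
  by (simp add: trace_def sum_2)

lemma sums_matrix_entrywise:
  fixes f :: "nat \<Rightarrow> 'a::real_normed_vector^'n^'m"
  assumes "\<And>i j. (\<lambda>k. f k $ i $ j) sums (S $ i $ j)"
  shows "f sums S"
  unfolding sums_def
proof (intro vec_tendstoI)
  fix i j
  show "((\<lambda>n. sum f {..<n} $ i $ j) \<longlongrightarrow> S $ i $ j) sequentially"
    using assms[of i j] by (simp add: sums_def sum_component)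
qed

lemma matrix_inv_left:
  fixes A :: "'a::semiring_1^'n^'m"
  assumes "invertible A"
  shows "matrix_inv A ** A = mat 1"
  using assms someI_ex[of "\<lambda>A'. A ** A' = mat 1 \<and> A' ** A = mat 1"]
  unfolding invertible_def matrix_inv_def by blast

(* In the type 2 the numeral 2 is the index 0, so 2 < 1: a 2 x 2 matrix M is upper
   triangular iff M $ 1 $ 2 = 0. *)
lemma less_2_cases: "j < (i :: 2) \<Longrightarrow> j = 2 \<and> i = 1"
  using exhaust_2[of i] exhaust_2[of j] by (auto simp: less_bit0_def bit0.Rep_numeral bit0.Rep_1)

lemma complex_vieta_roots: obtains z1 z2 :: complex where "z1 + z2 = s" "z1 * z2 = p"
proof
  let ?w = "csqrt (s^2 - 4 * p)"
  show "(s + ?w) / 2 + (s - ?w) / 2 = s"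
    by (simp add: field_simps)
  have "(s + ?w) * (s - ?w) = s^2 - ?w^2"
    by (simp add: power2_eq_square algebra_simps)
  then show "(s + ?w) / 2 * ((s - ?w) / 2) = p"
    by simp
qed

section \<open>The exponential of a 2 \<times> 2 matrix\<close>

fun pow_coeff :: "'a::comm_ring_1 \<Rightarrow> 'a \<Rightarrow> nat \<Rightarrow> 'a"
  and pow_const :: "'a::comm_ring_1 \<Rightarrow> 'a \<Rightarrow> nat \<Rightarrow> 'a" where
  "pow_coeff T D 0 = 0"
| "pow_coeff T D (Suc k) = T * pow_coeff T D k + pow_const T D k"
| "pow_const T D 0 = 1"
| "pow_const T D (Suc k) = - D * pow_coeff T D k"

lemma matpow_2:
  fixes X :: "complex^2^2"
  shows "matpow X k = mat (pow_coeff (trace X) (det X) k) ** X + mat (pow_const (trace X) (det X) k)"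
proof (induction k)
  case 0
  show ?case by simp
next
  case (Suc k)
  \<comment> \<open>Cayley--Hamilton: \<open>X ** X = trace X \<cdot> X - det X \<cdot> I\<close>.\<close>
  show ?case
    using Suc by (simp add: vec_eq_iff forall_2 matrix_mult_nth_2 mat_nth trace_2 det_2 algebra_simps)
qed

lemma pow_coeff_root:
  assumes "l^2 = T * l - D"
  shows "l * pow_coeff T D k + pow_const T D k = l^k"
proof (induction k)
  case (Suc k)
  have "l * pow_coeff T D (Suc k) + pow_const T D (Suc k) = l^2 * pow_coeff T D k + l * pow_const T D k"
    by (simp add: assms algebra_simps)
  also have "\<dots> = l * l^k"
    by (simp flip: Suc add: power2_eq_square algebra_simps)
  finally show ?case
    by simp
qed simp

lemma pow_coeff_double_root: "pow_coeff (2 * l) (l^2) (Suc k) = of_nat (Suc k) * l^k"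
proof (induction k)
  case (Suc k)
  define u where "u = pow_coeff (2 * l) (l^2) (Suc k)"
  define v where "v = pow_const (2 * l) (l^2) (Suc k)"
  have "l * u + v = l^Suc k"
    unfolding u_def v_def by (rule pow_coeff_root) (simp add: power2_eq_square)
  moreover have "u = of_nat (Suc k) * l^k"
    using Suc unfolding u_def .
  moreover have "pow_coeff (2 * l) (l^2) (Suc (Suc k)) = 2 * l * u + v"
    unfolding u_def v_def by (rule pow_coeff.simps(2))
  ultimately show ?case
    by (simp add: algebra_simps)
qed simp

lemma pow_coeff_bound:
  fixes T D :: "'a::real_normed_field"
  defines "M \<equiv> 1 + norm T + norm D"
  shows "norm (pow_coeff T D k) \<le> M^k \<and> norm (pow_const T D k) \<le> M^k"
proof (induction k)
  case (Suc k)
  have "norm (pow_coeff T D (Suc k)) \<le> norm T * M^k + M^k"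
    using Suc by (simp add: norm_mult norm_triangle_le add_mono mult_left_mono)
  moreover have "norm (pow_const T D (Suc k)) \<le> norm D * M^k"
    using Suc by (simp add: norm_mult mult_left_mono)
  moreover have "norm T * M^k + M^k \<le> M^Suc k" "norm D * M^k \<le> M^Suc k"
    by (simp_all add: M_def algebra_simps mult_right_mono)
  ultimately show ?case
    by linarith
qed (simp add: M_def)

lemma pow_coeff_exp_summable:
  fixes T D :: "'a::{real_normed_field,banach}"
  shows "summable (\<lambda>k. pow_coeff T D k / fact k)" and "summable (\<lambda>k. pow_const T D k / fact k)"
proof -
  let ?M = "1 + norm T + norm D"
  have M: "summable (\<lambda>k. ?M^k / fact k)"
    using summable_exp[of ?M] by (simp add: divide_inverse mult.commute)
  show "summable (\<lambda>k. pow_coeff T D k / fact k)" "summable (\<lambda>k. pow_const T D k / fact k)"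
    by (rule summable_comparison_test'[OF M, of 0],
        simp add: norm_divide pow_coeff_bound divide_right_mono)+
qed

definition exp_coeff :: "'a::{real_normed_field,banach} \<Rightarrow> 'a \<Rightarrow> 'a" where
  "exp_coeff T D = (\<Sum>k. pow_coeff T D k / fact k)"

definition exp_const :: "'a::{real_normed_field,banach} \<Rightarrow> 'a \<Rightarrow> 'a" where
  "exp_const T D = (\<Sum>k. pow_const T D k / fact k)"

lemma mexp_2:
  fixes X :: "complex^2^2"
  shows "mexp X = mat (exp_coeff (trace X) (det X)) ** X + mat (exp_const (trace X) (det X))"
  unfolding mexp_def
proof (rule sums_unique[symmetric], rule sums_matrix_entrywise)
  fix i j :: 2
  let ?u = "\<lambda>k. pow_coeff (trace X) (det X) k / fact k"
  let ?v = "\<lambda>k. pow_const (trace X) (det X) k / fact k"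
  let ?\<delta> = "if i = j then 1 else 0 :: complex"
  have "(\<lambda>k. ?u k * X $ i $ j + ?v k * ?\<delta>) sums
      (exp_coeff (trace X) (det X) * X $ i $ j + exp_const (trace X) (det X) * ?\<delta>)"
    unfolding exp_coeff_def exp_const_def
    by (intro sums_add sums_mult2 summable_sums pow_coeff_exp_summable)
  moreover have "((1 / fact k) *\<^sub>R matpow X k) $ i $ j = ?u k * X $ i $ j + ?v k * ?\<delta>" for k
    unfolding matpow_2 vector_scaleR_component
    by (simp add: mat_nth scaleR_conv_of_real add_divide_distrib)
  ultimately show "(\<lambda>k. ((1 / fact k) *\<^sub>R matpow X k) $ i $ j) sums
      (mat (exp_coeff (trace X) (det X)) ** X + mat (exp_const (trace X) (det X))) $ i $ j"
    by (cases "i = j") (simp_all add: mat_nth)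
qed

lemma exp_coeff_root:
  fixes l :: "'a::{real_normed_field,banach}"
  assumes "l^2 = T * l - D"
  shows "l * exp_coeff T D + exp_const T D = exp l"
proof -
  have "(\<lambda>k. l * (pow_coeff T D k / fact k) + pow_const T D k / fact k) sums
      (l * exp_coeff T D + exp_const T D)"
    unfolding exp_coeff_def exp_const_def
    by (intro sums_add sums_mult summable_sums pow_coeff_exp_summable)
  moreover have "(\<lambda>k. l * (pow_coeff T D k / fact k) + pow_const T D k / fact k) = (\<lambda>k. l^k /\<^sub>R fact k)"
  proof
    fix k
    have "l * (pow_coeff T D k / fact k) + pow_const T D k / fact k
        = (l * pow_coeff T D k + pow_const T D k) / fact k"
      by (simp add: add_divide_distrib)
    then show "l * (pow_coeff T D k / fact k) + pow_const T D k / fact k = l^k /\<^sub>R fact k"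
      by (simp only: pow_coeff_root[OF assms]) (simp add: scaleR_conv_of_real field_simps)
  qed
  ultimately show ?thesis
    using exp_converges sums_unique2 by metis
qed

lemma exp_coeff_double_root:
  fixes l :: "'a::{real_normed_field,banach}"
  shows "exp_coeff (2 * l) (l^2) = exp l"
proof -
  have "(\<lambda>k. pow_coeff (2 * l) (l^2) (Suc k) / fact (Suc k)) = (\<lambda>k. l^k /\<^sub>R fact k)"
    unfolding pow_coeff_double_root by (simp add: fun_eq_iff scaleR_conv_of_real field_simps del: of_nat_Suc)
  then have "(\<lambda>k. pow_coeff (2 * l) (l^2) k / fact k) sums exp l"
    using exp_converges[of l] sums_Suc_iff[of "\<lambda>k. pow_coeff (2 * l) (l^2) k / fact k"] by simp
  then show ?thesis
    unfolding exp_coeff_def by (rule sums_unique[symmetric])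
qed

lemma exp_coeff_eq_0:
  fixes l1 l2 :: complex
  assumes "exp_coeff (l1 + l2) (l1 * l2) = 0"
  shows "exp_const (l1 + l2) (l1 * l2) \<noteq> 0 \<and> (\<exists>m::int. m \<noteq> 0 \<and> l1 - l2 = 2 * pi * \<i> * m)"
proof -
  have root: "l * exp_coeff (l1 + l2) (l1 * l2) + exp_const (l1 + l2) (l1 * l2) = exp l"
    if "l = l1 \<or> l = l2" for l
    by (rule exp_coeff_root) (use that in \<open>auto simp: power2_eq_square algebra_simps\<close>)
  have const: "exp_const (l1 + l2) (l1 * l2) = exp l1" "exp_const (l1 + l2) (l1 * l2) = exp l2"
    using root[of l1] root[of l2] assms by simp_all
  have "l1 \<noteq> l2"
  proof
    assume "l1 = l2"
    then have "exp_coeff (l1 + l2) (l1 * l2) = exp l1"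
      using exp_coeff_double_root[of l1] by (simp add: power2_eq_square)
    with assms show False
      by simp
  qed
  moreover obtain n :: int where "l1 = l2 + of_int (2 * n) * pi * \<i>"
    using const exp_eq by metis
  ultimately show ?thesis
    using const(1) by (intro conjI exI[of _ n]) auto
qed

definition disc :: "'a::comm_ring_1^2^2 \<Rightarrow> 'a" where
  "disc X = (trace X)^2 - 4 * det X"

(* Since disc X = (l1 - l2)^2 for the eigenvalues l1, l2 of X, this says that the eigenvalues
   differ by a nonzero integer multiple of 2 pi i. *)
definition resonant :: "complex^2^2 \<Rightarrow> bool" where
  "resonant X \<longleftrightarrow> (\<exists>m::int. m \<noteq> 0 \<and> disc X = (2 * pi * \<i> * m)^2)"

lemma mexp_2_affine:
  fixes X :: "complex^2^2"
  obtains U V where "mexp X = mat U ** X + mat V" and "U = 0 \<longrightarrow> V \<noteq> 0 \<and> resonant X"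
proof -
  obtain l1 l2 where l: "l1 + l2 = trace X" "l1 * l2 = det X"
    using complex_vieta_roots .
  have disc: "disc X = (l1 - l2)^2"
    unfolding disc_def l[symmetric] by (simp add: power2_eq_square algebra_simps)
  show ?thesis
  proof (intro that[OF mexp_2] impI)
    assume "exp_coeff (trace X) (det X) = 0"
    then have "exp_const (trace X) (det X) \<noteq> 0 \<and> (\<exists>m::int. m \<noteq> 0 \<and> l1 - l2 = 2 * pi * \<i> * m)"
      using exp_coeff_eq_0[of l1 l2] unfolding l by blast
    then show "exp_const (trace X) (det X) \<noteq> 0 \<and> resonant X"
      unfolding resonant_def disc by metis
  qed
qed

section \<open>Commutators and common eigenvectors\<close>

definition commutator :: "'a::ring_1^'n^'n \<Rightarrow> 'a^'n^'n \<Rightarrow> 'a^'n^'n" where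
  "commutator A B = A ** B - B ** A"

lemma det_commutator_nz_independent_1_A:
  fixes A B :: "'a::field^2^2"
  assumes C: "det (commutator A B) \<noteq> 0" and "mat a + mat b ** A = 0"
  shows "a = 0 \<and> b = 0"
proof -
  have entries: "(if i = j then a else 0) + b * A $ i $ j = 0" for i j
    using arg_cong[OF assms(2), of "\<lambda>M. M $ i $ j"] by (simp add: mat_nth)
  have "b = 0"
  proof (rule ccontr)
    assume "b \<noteq> 0"
    then have "A $ i $ j = mat (- a / b) $ i $ j" for i j
      using entries[of i j] by (cases "i = j") (auto simp: mat_nth field_simps eq_neg_iff_add_eq_0)
    then have "A = mat (- a / b)"
      by (simp add: vec_eq_iff)
    then have "commutator A B = 0"
      by (simp add: commutator_def vec_eq_iff forall_2 matrix_mult_nth_2 mat_nth)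
    with C show False
      by (simp add: det_2)
  qed
  with entries[of 1 1] show ?thesis
    by simp
qed

lemma det_commutator_nz_independent_1_A_B_AB:
  fixes A B :: "'a::field^2^2"
  assumes C: "det (commutator A B) \<noteq> 0"
    and R: "mat x0 + mat x1 ** A + mat x2 ** B + mat x3 ** (A ** B) = 0"
  shows "x1 = 0 \<and> x2 = 0 \<and> x3 = 0"
proof -
  let ?R = "mat x0 + mat x1 ** A + mat x2 ** B + mat x3 ** (A ** B)"
  have "(mat x2 + mat x3 ** A) ** commutator A B = A ** ?R - ?R ** A"
    by (simp add: commutator_def vec_eq_iff forall_2 matrix_mult_nth_2 mat_nth algebra_simps)
  then have "(mat x2 + mat x3 ** A) ** commutator A B = 0"
    using R by simp
  moreover obtain C' where "commutator A B ** C' = mat 1"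
    using C invertible_det_nz invertible_right_inverse by blast
  ultimately have "mat x2 + mat x3 ** A = 0"
    by (metis matrix_mul_assoc matrix_mul_rid times0_left)
  then have "x2 = 0" "x3 = 0"
    using det_commutator_nz_independent_1_A C by blast+
  with R have "mat x0 + mat x1 ** A = 0"
    by simp
  with \<open>x2 = 0\<close> \<open>x3 = 0\<close> show ?thesis
    using det_commutator_nz_independent_1_A C by blast
qed

lemma mexp_add_imp_resonant:
  fixes A B :: "complex^2^2"
  assumes C: "det (commutator A B) \<noteq> 0" and add: "mexp (A + B) = mexp A ** mexp B"
  shows "resonant A \<and> resonant B \<and> resonant (A + B)"
proof -
  obtain UA VA where A: "mexp A = mat UA ** A + mat VA" "UA = 0 \<longrightarrow> VA \<noteq> 0 \<and> resonant A"
    by (rule mexp_2_affine[of A])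
  obtain UB VB where B: "mexp B = mat UB ** B + mat VB" "UB = 0 \<longrightarrow> VB \<noteq> 0 \<and> resonant B"
    by (rule mexp_2_affine[of B])
  obtain UC VC where AB: "mexp (A + B) = mat UC ** (A + B) + mat VC"
      "UC = 0 \<longrightarrow> VC \<noteq> 0 \<and> resonant (A + B)"
    by (rule mexp_2_affine[of "A + B"])
  have "mat (VA * VB - VC) + mat (UA * VB - UC) ** A + mat (VA * UB - UC) ** B + mat (UA * UB) ** (A ** B)
      = mexp A ** mexp B - mexp (A + B)"
    unfolding A(1) B(1) AB(1)
    by (simp add: vec_eq_iff forall_2 matrix_mult_nth_2 mat_nth algebra_simps)
  also have "\<dots> = 0"
    using add by simp
  finally have "UA * VB - UC = 0 \<and> VA * UB - UC = 0 \<and> UA * UB = 0"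
    by (rule det_commutator_nz_independent_1_A_B_AB[OF C])
  then have UC: "UC = UA * VB" "UC = VA * UB" and "UA * UB = 0"
    by simp_all
  have "UA = 0 \<and> UB = 0 \<and> UC = 0"
  proof (cases "UA = 0")
    case True
    then have "VA * UB = 0" "VA \<noteq> 0"
      using UC A(2) by simp_all
    then show ?thesis
      using True UC by simp
  next
    case False
    then have "UB = 0"
      using \<open>UA * UB = 0\<close> by simp
    then have "UA * VB = 0" "VB \<noteq> 0"
      using UC B(2) by simp_all
    then show ?thesis
      using False by simp
  qed
  then show ?thesis
    using A(2) B(2) AB(2) by blast
qed

lemma binary_quadratic_factor:
  fixes a0 a1 a2 :: complex
  assumes "a0 \<noteq> 0 \<or> a1 \<noteq> 0 \<or> a2 \<noteq> 0"
  obtains \<alpha> \<beta> \<gamma> \<delta> where "\<alpha> \<noteq> 0 \<or> \<beta> \<noteq> 0" "\<gamma> \<noteq> 0 \<or> \<delta> \<noteq> 0"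
    "a0 = \<alpha> * \<gamma>" "a1 = - (\<alpha> * \<delta> + \<beta> * \<gamma>)" "a2 = \<beta> * \<delta>"
proof (cases "a0 = 0")
  case True
  then show ?thesis
    using assms by (intro that[of 0 "-1" a1 "-a2"]) auto
next
  case False
  obtain r1 r2 where r: "r1 + r2 = - a1 / a0" "r1 * r2 = a2 / a0"
    by (rule complex_vieta_roots)
  show ?thesis
  proof (rule that[of a0 "a0 * r1" 1 r2])
    show "a1 = - (a0 * r2 + a0 * r1 * 1)"
      using r(1) False by (simp add: field_simps)
    show "a2 = a0 * r1 * r2"
      using r(2) False by (simp add: field_simps)
  qed (use False in auto)
qed

lemma binary_quadratic_zero:
  fixes a0 a1 a2 :: complex
  obtains x y where "x \<noteq> 0 \<or> y \<noteq> 0" "a0 * x^2 + a1 * x * y + a2 * y^2 = 0"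
proof (cases "a0 = 0 \<and> a1 = 0 \<and> a2 = 0")
  case True
  then show ?thesis
    by (intro that[of 1 0]) simp_all
next
  case False
  then have "a0 \<noteq> 0 \<or> a1 \<noteq> 0 \<or> a2 \<noteq> 0"
    by simp
  then obtain \<alpha> \<beta> \<gamma> \<delta> where "\<alpha> \<noteq> 0 \<or> \<beta> \<noteq> 0" "\<gamma> \<noteq> 0 \<or> \<delta> \<noteq> 0"
      and a: "a0 = \<alpha> * \<gamma>" "a1 = - (\<alpha> * \<delta> + \<beta> * \<gamma>)" "a2 = \<beta> * \<delta>"
    by (rule binary_quadratic_factor)
  moreover have "a0 * \<beta>^2 + a1 * \<beta> * \<alpha> + a2 * \<alpha>^2 = 0"
    unfolding a by (simp add: power2_eq_square algebra_simps)
  ultimately show ?thesis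
    using that by blast
qed

lemma binary_quadratics_common_zero:
  fixes a0 a1 a2 b0 b1 b2 :: complex
  assumes "(a0 * b2 - a2 * b0)^2 - (a0 * b1 - a1 * b0) * (a1 * b2 - a2 * b1) = 0"
  obtains x y where "x \<noteq> 0 \<or> y \<noteq> 0"
    "a0 * x^2 + a1 * x * y + a2 * y^2 = 0" "b0 * x^2 + b1 * x * y + b2 * y^2 = 0"
proof (cases "a0 = 0 \<and> a1 = 0 \<and> a2 = 0")
  case True
  then show ?thesis
    using binary_quadratic_zero that by (metis mult_zero_left add_0)
next
  case False
  obtain \<alpha> \<beta> \<gamma> \<delta> where nz: "\<alpha> \<noteq> 0 \<or> \<beta> \<noteq> 0" "\<gamma> \<noteq> 0 \<or> \<delta> \<noteq> 0"
      and a: "a0 = \<alpha> * \<gamma>" "a1 = - (\<alpha> * \<delta> + \<beta> * \<gamma>)" "a2 = \<beta> * \<delta>"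
    by (rule binary_quadratic_factor) (use False in simp)
  define q where "q x y = b0 * x^2 + b1 * x * y + b2 * y^2" for x y
  \<comment> \<open>The resultant is the product of the values of the second form at the two zeros of the first.\<close>
  have "(a0 * b2 - a2 * b0)^2 - (a0 * b1 - a1 * b0) * (a1 * b2 - a2 * b1) = q \<beta> \<alpha> * q \<delta> \<gamma>"
    unfolding a q_def by (simp add: power2_eq_square algebra_simps)
  then have "q \<beta> \<alpha> = 0 \<or> q \<delta> \<gamma> = 0"
    using assms by simp
  moreover have "a0 * \<beta>^2 + a1 * \<beta> * \<alpha> + a2 * \<alpha>^2 = 0" "a0 * \<delta>^2 + a1 * \<delta> * \<gamma> + a2 * \<gamma>^2 = 0"
    unfolding a by (simp_all add: power2_eq_square algebra_simps)
  ultimately show ?thesis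
    using nz that unfolding q_def by blast
qed

lemma eigenvector_of_binary_quadratic_zero:
  fixes M :: "'a::field^2^2"
  assumes "M $ 2 $ 1 * x^2 + (M $ 2 $ 2 - M $ 1 $ 1) * x * y - M $ 1 $ 2 * y^2 = 0" "x \<noteq> 0 \<or> y \<noteq> 0"
  obtains c where "M *v vector [x, y] = c *s vector [x, y]"
proof -
  have det: "x * (M $ 2 $ 1 * x + M $ 2 $ 2 * y) = y * (M $ 1 $ 1 * x + M $ 1 $ 2 * y)"
    using assms(1) by (simp add: power2_eq_square algebra_simps)
  have eig: "M *v vector [x, y] = c *s vector [x, y]"
    if "M $ 1 $ 1 * x + M $ 1 $ 2 * y = c * x" "M $ 2 $ 1 * x + M $ 2 $ 2 * y = c * y" for c
    using that by (simp add: vec_eq_iff forall_2 matrix_vector_mult_def sum_2)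
  show ?thesis
  proof (cases "x = 0")
    case True
    with assms have "M $ 1 $ 2 = 0" "y \<noteq> 0"
      by auto
    with True show ?thesis
      by (intro that[OF eig[of "M $ 2 $ 2"]]) auto
  next
    case False
    with det show ?thesis
      by (intro that[OF eig[of "(M $ 1 $ 1 * x + M $ 1 $ 2 * y) / x"]]) (auto simp: field_simps)
  qed
qed

lemma det_commutator_eq_0_imp_common_eigenvector:
  fixes A B :: "complex^2^2"
  assumes "det (commutator A B) = 0"
  obtains v a b where "v \<noteq> 0" "A *v v = a *s v" "B *v v = b *s v"
proof -
  \<comment> \<open>The resultant of the binary forms whose zeros are the eigenvectors of \<open>A\<close> and \<open>B\<close>.\<close>
  have "(A $ 2 $ 1 * - B $ 1 $ 2 - - A $ 1 $ 2 * B $ 2 $ 1)^2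
      - (A $ 2 $ 1 * (B $ 2 $ 2 - B $ 1 $ 1) - (A $ 2 $ 2 - A $ 1 $ 1) * B $ 2 $ 1)
        * ((A $ 2 $ 2 - A $ 1 $ 1) * - B $ 1 $ 2 - - A $ 1 $ 2 * (B $ 2 $ 2 - B $ 1 $ 1))
      = - det (commutator A B)"
    by (simp add: commutator_def det_2 matrix_mult_nth_2 power2_eq_square algebra_simps)
  also have "\<dots> = 0"
    using assms by simp
  finally obtain x y where xy: "x \<noteq> 0 \<or> y \<noteq> 0"
      "A $ 2 $ 1 * x^2 + (A $ 2 $ 2 - A $ 1 $ 1) * x * y + - A $ 1 $ 2 * y^2 = 0"
      "B $ 2 $ 1 * x^2 + (B $ 2 $ 2 - B $ 1 $ 1) * x * y + - B $ 1 $ 2 * y^2 = 0"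
    by (rule binary_quadratics_common_zero)
  have "A $ 2 $ 1 * x^2 + (A $ 2 $ 2 - A $ 1 $ 1) * x * y - A $ 1 $ 2 * y^2 = 0"
    using xy(2) by simp
  then obtain a where "A *v vector [x, y] = a *s vector [x, y]"
    using xy(1) by (rule eigenvector_of_binary_quadratic_zero)
  have "B $ 2 $ 1 * x^2 + (B $ 2 $ 2 - B $ 1 $ 1) * x * y - B $ 1 $ 2 * y^2 = 0"
    using xy(3) by simp
  then obtain b where "B *v vector [x, y] = b *s vector [x, y]"
    using xy(1) by (rule eigenvector_of_binary_quadratic_zero)
  have "vector [x, y] \<noteq> (0 :: complex^2)"
    using xy(1) by (metis vector_2 zero_index)
  then show ?thesis
    by (rule that) fact+
qed

lemma common_eigenvector_imp_simult_trigonalizable: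
  fixes A B :: "complex^2^2"
  assumes "v \<noteq> 0" and "A *v v = a *s v" and "B *v v = b *s v"
  shows "simult_trigonalizable A B"
proof -
  obtain w :: "complex^2" where w: "w $ 1 * v $ 2 - v $ 1 * w $ 2 \<noteq> 0"
  proof (cases "v $ 2 = 0")
    case True
    with \<open>v \<noteq> 0\<close> have "v $ 1 \<noteq> 0"
      by (metis exhaust_2 vec_eq_iff zero_index)
    with True show ?thesis
      by (intro that[of "axis 2 1"]) (simp add: axis_def)
  next
    case False
    then show ?thesis
      by (intro that[of "axis 1 1"]) (simp add: axis_def)
  qed
  define P :: "complex^2^2" where "P = (\<chi> i j. if j = 1 then w $ i else v $ i)"
  have "invertible P"
    using w by (simp add: invertible_det_nz det_2 P_def)
  have Pe: "P *v axis 2 1 = v"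
    by (simp add: P_def vec_eq_iff forall_2 matrix_vector_mult_def sum_2 axis_def)
  have "upper_triangular (matrix_inv P ** M ** P)" if "M *v v = c *s v" for M c
  proof -
    let ?Q = "matrix_inv P"
    have "(?Q ** M ** P) *v axis 2 1 = ?Q *v (c *s v)"
      by (simp flip: matrix_vector_mul_assoc add: Pe that)
    also have "\<dots> = c *s ((?Q ** P) *v axis 2 1)"
      by (simp flip: matrix_vector_mul_assoc add: Pe vector_scalar_commute)
    also have "\<dots> = c *s axis 2 1"
      by (simp add: matrix_inv_left[OF \<open>invertible P\<close>])
    finally have "(?Q ** M ** P) $ 1 $ 2 = 0"
      by (simp add: vec_eq_iff forall_2 matrix_vector_mult_def sum_2 axis_def)
    then show ?thesis
      unfolding upper_triangular_def using less_2_cases by blast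
  qed
  then show ?thesis
    unfolding simult_trigonalizable_def using \<open>invertible P\<close> assms(2,3) by blast
qed

lemma det_commutator_eq_0_imp_simult_trigonalizable:
  fixes A B :: "complex^2^2"
  assumes "det (commutator A B) = 0"
  shows "simult_trigonalizable A B"
  using det_commutator_eq_0_imp_common_eigenvector[OF assms] common_eigenvector_imp_simult_trigonalizable
  by metis

section \<open>The discriminant along a pencil\<close>

lemma disc_scaleR_add:
  fixes f g :: "complex^2^2"
  shows "disc (\<tau> *\<^sub>R f + g) = of_real \<tau>^2 * disc f + of_real \<tau> * (disc (f + g) - disc f - disc g) + disc g"
  unfolding disc_def trace_2 det_2 vector_add_component matrix_scaleR_nth
  by (simp add: power2_eq_square algebra_simps)

lemma det_commutator_disc:
  fixes f g :: "'a::comm_ring_1^2^2"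
  shows "16 * det (commutator f g) = 4 * disc f * disc g - (disc (f + g) - disc f - disc g)^2"
  by (simp add: commutator_def disc_def trace_2 det_2 matrix_mult_nth_2 power2_eq_square algebra_simps)

lemma det_commutator_scaleR:
  fixes f g :: "complex^2^2"
  shows "det (commutator (\<tau> *\<^sub>R f) g) = of_real \<tau>^2 * det (commutator f g)"
  unfolding commutator_def det_2 vector_minus_component matrix_mult_nth_2 matrix_scaleR_nth
  by (simp add: power2_eq_square algebra_simps)

lemma abs_le_diff_of_squares:
  fixes a b d :: int
  assumes "a^2 - b^2 = d" and "d \<noteq> 0"
  shows "\<bar>a\<bar> \<le> \<bar>d\<bar>"
proof -
  have "d = (\<bar>a\<bar> - \<bar>b\<bar>) * (\<bar>a\<bar> + \<bar>b\<bar>)"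
    by (simp flip: assms(1) add: power2_eq_square algebra_simps abs_mult_self_eq)
  then have "\<bar>d\<bar> = \<bar>\<bar>a\<bar> - \<bar>b\<bar>\<bar> * (\<bar>a\<bar> + \<bar>b\<bar>)"
    by (simp add: abs_mult)
  moreover have "\<bar>a\<bar> \<noteq> \<bar>b\<bar>"
    using assms by (metis power2_abs diff_self)
  then have "\<bar>\<bar>a\<bar> - \<bar>b\<bar>\<bar> \<ge> 1"
    by linarith
  ultimately have "1 * (\<bar>a\<bar> + \<bar>b\<bar>) \<le> \<bar>d\<bar>"
    by (metis abs_ge_zero add_nonneg_nonneg mult_right_mono)
  then show ?thesis
    by simp
qed

lemma quadratic_square_values:
  fixes k p m :: int
  assumes "k \<noteq> 0" and "\<And>N. \<exists>t \<ge> N. \<exists>z. z^2 = k^2 * t^2 + p * t + m^2"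
  shows "p^2 = 4 * k^2 * m^2"
proof (rule ccontr)
  define d where "d = p^2 - 4 * k^2 * m^2"
  assume "p^2 \<noteq> 4 * k^2 * m^2"
  then have "d \<noteq> 0"
    by (simp add: d_def)
  obtain t z where t: "t \<ge> \<bar>d\<bar> + \<bar>p\<bar> + 1" and z: "z^2 = k^2 * t^2 + p * t + m^2"
    using assms(2) by blast
  have "(2 * k * z)^2 = 4 * k^2 * (k^2 * t^2 + p * t + m^2)"
    by (simp add: power_mult_distrib z)
  then have "(2 * k^2 * t + p)^2 - (2 * k * z)^2 = d"
    by (simp add: d_def power2_eq_square algebra_simps)
  then have "\<bar>2 * k^2 * t + p\<bar> \<le> \<bar>d\<bar>"
    using \<open>d \<noteq> 0\<close> by (rule abs_le_diff_of_squares)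
  moreover have "1 * t \<le> k^2 * t"
    using \<open>k \<noteq> 0\<close> t by (intro mult_right_mono) (auto simp: int_one_le_iff_zero_less)
  ultimately show False
    using t by linarith
qed

lemma resonant_pencil_imp_det_commutator_eq_0:
  fixes f g :: "complex^2^2"
  assumes "resonant f" and "resonant g" and "resonant (f + g)"
    and "\<And>N. \<exists>\<tau> \<ge> N. resonant (of_int \<tau> *\<^sub>R f + g)"
  shows "det (commutator f g) = 0"
proof -
  define \<nu> :: complex where "\<nu> = (2 * pi * \<i>)^2"
  have "\<nu> \<noteq> 0"
    by (simp add: \<nu>_def)
  have disc: "disc X = \<nu> * of_int (m^2)" if "disc X = (2 * pi * \<i> * m)^2" for X and m :: int
    using that by (simp add: \<nu>_def power_mult_distrib)
  obtain k m q :: int where "k \<noteq> 0"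
    and f: "disc f = \<nu> * of_int (k^2)" and g: "disc g = \<nu> * of_int (m^2)"
    and fg: "disc (f + g) = \<nu> * of_int (q^2)"
    using assms(1-3) disc unfolding resonant_def by meson
  define p where "p = q^2 - k^2 - m^2"
  have polar: "disc (f + g) - disc f - disc g = \<nu> * of_int p"
    by (simp add: f g fg p_def algebra_simps)
  have "\<exists>t \<ge> N. \<exists>z. z^2 = k^2 * t^2 + p * t + m^2" for N
  proof -
    obtain t z :: int where "t \<ge> N" and "disc (of_int t *\<^sub>R f + g) = \<nu> * of_int (z^2)"
      using assms(4)[of N] disc unfolding resonant_def by meson
    moreover have "disc (of_int t *\<^sub>R f + g) = \<nu> * of_int (k^2 * t^2 + p * t + m^2)"
      unfolding disc_scaleR_add polar unfolding f g by (simp add: algebra_simps)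
    ultimately show ?thesis
      using \<open>\<nu> \<noteq> 0\<close> by (metis mult_left_cancel of_int_eq_iff)
  qed
  then have "p^2 = 4 * k^2 * m^2"
    using \<open>k \<noteq> 0\<close> quadratic_square_values by blast
  have "16 * det (commutator f g) = \<nu>^2 * of_int (4 * k^2 * m^2 - p^2)"
    unfolding det_commutator_disc polar unfolding f g
    by (simp add: power_mult_distrib power2_eq_square algebra_simps)
  also have "\<dots> = 0"
    using \<open>p^2 = 4 * k^2 * m^2\<close> by simp
  finally show ?thesis
    by simp
qed

theorem corollary1:
  fixes f g :: "complex^2^2" and t :: "nat \<Rightarrow> int"
  assumes "strict_mono t" and "t 0 = 1" and "t 1 = 2"
    and "\<forall>n. mexp (of_int (t n) *\<^sub>R f + g) = mexp (of_int (t n) *\<^sub>R f) ** mexp g"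
  shows "simult_trigonalizable f g"
proof (rule ccontr)
  assume "\<not> simult_trigonalizable f g"
  then have C: "det (commutator f g) \<noteq> 0"
    using det_commutator_eq_0_imp_simult_trigonalizable by blast
  have t_ge: "int n + 1 \<le> t n" for n
  proof (induction n)
    case (Suc n)
    then show ?case
      using strict_monoD[OF assms(1), of n "Suc n"] by simp
  qed (simp add: assms(2))
  have res: "resonant (of_int (t n) *\<^sub>R f) \<and> resonant g \<and> resonant (of_int (t n) *\<^sub>R f + g)" for n
  proof (rule mexp_add_imp_resonant)
    show "det (commutator (of_int (t n) *\<^sub>R f) g) \<noteq> 0"
      using C t_ge[of n] by (simp add: det_commutator_scaleR)
  qed (use assms(4) in blast)
  have "det (commutator f g) = 0"
  proof (rule resonant_pencil_imp_det_commutator_eq_0)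
    show "resonant f" "resonant g" "resonant (f + g)"
      using res[of 0] by (simp_all add: assms(2))
    show "\<exists>\<tau> \<ge> N. resonant (of_int \<tau> *\<^sub>R f + g)" for N
      using res[of "nat N"] t_ge[of "nat N"] by (intro exI[of _ "t (nat N)"]) (auto split: if_splits)
  qed
  with C show False
    by contradiction
qed

end
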